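(* Let $g(n,k)$ be the number of $k$-faces of $I(\mathfrak{gl}_n,V\oplus\bigwedge^2)$ for $n,k\ge0$, and set $g(n,k)=0$ if $n<0$ or $k\notin[0,n]$. Then for all $n\ge 2$ and all $k$, \[ g(n,k)=2g(n-1,k)-g(n-2,k)+2g(n-1,k-1)-g(n-2,k-1). \]
   Context: Identify the diagonal Cartan subalgebra of $\mathfrak{gl}_n$ with $\mathbb{R}^n$ with coordinates $x_1,\dots,x_n$. Let $W=\{x_1\ge\cdots\ge x_n\}$ and $W^0=\{x_1>\cdots>x_n\}$. For $1\le i\le j\le n$ let $\lambda_{i,j}^\perp$ be the hyperplane $x_i+x_j=0$ (for $i=j$: $x_i=0$). The arrangement $I(\mathfrak{gl}_n,V\oplus\bigwedge^2)$ consists of these hyperplanes restricted to $W$. Its chambers are the closures of the connected components of $W^0\setminus\bigcup\lambda_{i,j}^\perp$; a face is a chamber or the intersection of a chamber with a supporting hyperplane; a $k$-face is a face whose linear span has dimension $k$. *)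

theory Defs
  imports "HOL-Analysis.Analysis" "HOL-Library.Function_Algebras"
begin

text \<open>Points of R^n are modelled as functions nat => real vanishing at indices >= n;
  coordinate x_{i+1} of the paper is x i here.  The topology is the product topology
  on nat => real (which induces the Euclidean topology on the closed subspace R^n).\<close>

definition Rn :: "nat \<Rightarrow> (nat \<Rightarrow> real) set" where
  "Rn n = {x. \<forall>i\<ge>n. x i = 0}"

definition Wcl :: "nat \<Rightarrow> (nat \<Rightarrow> real) set" where
  "Wcl n = {x \<in> Rn n. \<forall>i j. i \<le> j \<and> j < n \<longrightarrow> x j \<le> x i}"

definition W0 :: "nat \<Rightarrow> (nat \<Rightarrow> real) set" where
  "W0 n = {x \<in> Rn n. \<forall>i j. i < j \<and> j < n \<longrightarrow> x j < x i}"

definition lam_perp :: "nat \<Rightarrow> nat \<Rightarrow> nat \<Rightarrow> (nat \<Rightarrow> real) set" where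
  "lam_perp n i j = (if i = j then {x \<in> Rn n. x i = 0} else {x \<in> Rn n. x i + x j = 0})"

definition arr_hyps :: "nat \<Rightarrow> (nat \<Rightarrow> real) set set" where
  "arr_hyps n = {lam_perp n i j | i j. i \<le> j \<and> j < n}"

definition chambers :: "nat \<Rightarrow> (nat \<Rightarrow> real) set set" where
  "chambers n = {closure (connected_component_set (W0 n - \<Union>(arr_hyps n)) x) | x.
                   x \<in> W0 n - \<Union>(arr_hyps n)}"

definition supporting_hyperplane :: "nat \<Rightarrow> (nat \<Rightarrow> real) set \<Rightarrow> (nat \<Rightarrow> real) set \<Rightarrow> bool" where
  "supporting_hyperplane n C H \<longleftrightarrow>
     (\<exists>a \<in> Rn n. a \<noteq> 0 \<and>
        H = {x \<in> Rn n. (\<Sum>i<n. a i * x i) = 0} \<and>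
        C \<subseteq> {x. (\<Sum>i<n. a i * x i) \<ge> 0} \<and> C \<inter> H \<noteq> {})"

definition faces :: "nat \<Rightarrow> (nat \<Rightarrow> real) set set" where
  "faces n = chambers n \<union>
     {C \<inter> H | C H. C \<in> chambers n \<and> supporting_hyperplane n C H}"

definition span_dim :: "(nat \<Rightarrow> real) set \<Rightarrow> nat" where
  "span_dim F = vector_space.dim (\<lambda>(c::real) (f::nat \<Rightarrow> real) i. c * f i) F"

definition num_faces :: "nat \<Rightarrow> nat \<Rightarrow> nat" where
  "num_faces n k = card {F \<in> faces n. span_dim F = k}"

definition g :: "int \<Rightarrow> int \<Rightarrow> int" where
  "g n k = (if n < 0 \<or> k < 0 \<or> k > n then 0 else int (num_faces (nat n) (nat k)))"

end

theory Submission
  imports Defs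
begin

text \<open>Every point \<open>x\<close> of the closed chamber \<open>W\<close> determines the cone of points \<open>y\<close> whose sign
  vector with respect to all forms \<open>x\<^sub>i + x\<^sub>j\<close> and \<open>x\<^sub>i - x\<^sub>j\<close> specializes that of \<open>x\<close>
  (a zero stays zero, a strict sign may become zero). Chambers are these cones for generic \<open>x\<close>,
  as the sign vector is constant on connected components of the complement. A supporting
  hyperplane cuts such a cone in the cone of a point of maximal support; conversely, summing the
  forms that vanish at \<open>z\<close>, each signed as at a nearby generic point, gives a supporting hyperplane
  cutting out the cone of \<open>z\<close>. So the faces are exactly these cones.

  Replacing each \<open>x\<^sub>i\<close> by \<open>sgn x\<^sub>i\<close> times the rank of \<open>|x\<^sub>i|\<close> among the distinct nonzero
  absolute values preserves the sign vector. Hence the \<open>k\<close>-faces correspond bijectively to the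
  weakly decreasing integer sequences of length \<open>n\<close> whose nonzero absolute values are exactly
  \<open>1..k\<close>; the cone of such a sequence is spanned by \<open>k\<close> independent level vectors. The
  recursion counts these sequences according to whether they start with \<open>k\<close> and end with \<open>-k\<close>.\<close>

section \<open>Sign vectors of the root forms\<close>

definition weakly_same_sign :: "real \<Rightarrow> real \<Rightarrow> bool" where
  "weakly_same_sign a b \<longleftrightarrow> (a = 0 \<longrightarrow> b = 0) \<and> (a > 0 \<longrightarrow> b \<ge> 0) \<and> (a < 0 \<longrightarrow> b \<le> 0)"

lemma weakly_same_sign_refl: "weakly_same_sign a a"
  by (auto simp: weakly_same_sign_def)

lemma weakly_same_sign_trans:
  "weakly_same_sign a b \<Longrightarrow> weakly_same_sign b c \<Longrightarrow> weakly_same_sign a c"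
  by (auto simp: weakly_same_sign_def)

lemma weakly_same_sign_cong: "sgn a = sgn a' \<Longrightarrow> weakly_same_sign a b = weakly_same_sign a' b"
  by (auto simp: weakly_same_sign_def sgn_if split: if_splits)

lemma weakly_same_sign_antisym: "weakly_same_sign a b \<Longrightarrow> weakly_same_sign b a \<Longrightarrow> sgn a = sgn b"
  by (auto simp: weakly_same_sign_def sgn_if)

lemma weakly_same_sign_if_sgn_eq: "sgn a = sgn b \<Longrightarrow> weakly_same_sign a b"
  using weakly_same_sign_cong weakly_same_sign_refl by metis

lemma weakly_same_sign_0: "weakly_same_sign a 0"
  by (simp add: weakly_same_sign_def)

lemma sgn_eq_if_weakly_same_sign: "weakly_same_sign a b \<Longrightarrow> b \<noteq> 0 \<Longrightarrow> sgn a = sgn b"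
  by (auto simp: weakly_same_sign_def sgn_if)

lemma weakly_same_sign_add: "weakly_same_sign a b \<Longrightarrow> weakly_same_sign a c \<Longrightarrow> weakly_same_sign a (b + c)"
  by (auto simp: weakly_same_sign_def)

lemma weakly_same_sign_add_eq_0:
  "weakly_same_sign a b \<Longrightarrow> weakly_same_sign a c \<Longrightarrow> b + c = 0 \<longleftrightarrow> b = 0 \<and> c = 0"
  by (auto simp: weakly_same_sign_def)

lemma weakly_same_sign_mult_sgn_nonneg: "weakly_same_sign a b \<Longrightarrow> sgn a * b \<ge> 0"
  by (auto simp: weakly_same_sign_def sgn_if)

lemma sgn_convex_comb:
  fixes a b t :: real
  assumes "sgn a = sgn b" "0 \<le> t" "t \<le> 1"
  shows "sgn ((1 - t) * a + t * b) = sgn a"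
proof -
  consider "a > 0" "b > 0" | "a = 0" "b = 0" | "a < 0" "b < 0"
    using assms(1) by (cases a "0::real" rule: linorder_cases) (auto simp: sgn_if split: if_splits)
  then show ?thesis
  proof cases
    case 1
    then have "(1 - t) * a + t * b > 0"
      using assms(2,3) by (cases "t = 1") (auto intro: add_pos_nonneg)
    with 1 show ?thesis by simp
  next
    case 3
    then have "(1 - t) * a + t * b < 0"
      using assms(2,3) by (cases "t = 1") (auto intro: add_neg_nonpos simp: mult_pos_neg mult_nonneg_nonpos)
    with 3 show ?thesis by simp
  qed simp
qed

lemma sgn_convex_comb_weakly_same_sign:
  fixes a b t :: real
  assumes "weakly_same_sign a b" "0 < t" "t \<le> 1"
  shows "sgn ((1 - t) * b + t * a) = sgn a"
proof -
  consider "a > 0" "b \<ge> 0" | "a = 0" "b = 0" | "a < 0" "b \<le> 0"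
    using assms(1) unfolding weakly_same_sign_def by (cases a "0::real" rule: linorder_cases) auto
  then show ?thesis
  proof cases
    case 1
    then have "(1 - t) * b + t * a > 0" using assms(2,3) by (intro add_nonneg_pos) auto
    with 1 show ?thesis by simp
  next
    case 3
    then have "(1 - t) * b + t * a < 0"
      using assms(2,3) by (intro add_nonpos_neg) (auto simp: mult_nonneg_nonpos mult_pos_neg)
    with 3 show ?thesis by simp
  qed simp
qed

lemma sgn_constant_on_connected:
  fixes f :: "'a::topological_space \<Rightarrow> real"
  assumes "connected C" "continuous_on C f" "\<forall>z\<in>C. f z \<noteq> 0" "x \<in> C" "y \<in> C"
  shows "sgn (f x) = sgn (f y)"
proof (rule ccontr)
  assume "sgn (f x) \<noteq> sgn (f y)"
  then have "f x < 0 \<and> 0 < f y \<or> f y < 0 \<and> 0 < f x"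
    using assms(3-5) by (auto simp: sgn_if split: if_splits)
  moreover have "is_interval (f ` C)"
    using assms(1,2) connected_continuous_image is_interval_connected_1 by blast
  ultimately have "0 \<in> f ` C"
    using assms(4,5) unfolding is_interval_1 by (meson imageI less_eq_real_def)
  with assms(3) show False by auto
qed

text \<open>The forms \<open>x\<^sub>i + x\<^sub>j\<close> cut out the hyperplanes of the arrangement, the forms
  \<open>x\<^sub>i - x\<^sub>j\<close> the walls of \<open>W\<close>; a face is described by constraining the signs of both.
  The index \<open>(False, i, i)\<close> would give the zero form and is excluded from \<open>root_indices\<close>.\<close>

fun root_form :: "bool \<times> nat \<times> nat \<Rightarrow> (nat \<Rightarrow> real) \<Rightarrow> real" where
  "root_form (b, i, j) x = (if b then x i + x j else x i - x j)"

definition root_indices :: "nat \<Rightarrow> (bool \<times> nat \<times> nat) set" where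
  "root_indices n = {(b, i, j). i < n \<and> j < n \<and> (b \<or> i \<noteq> j)}"

lemma finite_root_indices: "finite (root_indices n)"
  by (rule finite_subset[of _ "UNIV \<times> {..<n} \<times> {..<n}"]) (auto simp: root_indices_def)

lemma root_form_add [simp]: "root_form f (\<lambda>m. u m + v m) = root_form f u + root_form f v"
  by (cases f) simp

lemma root_form_diff [simp]: "root_form f (\<lambda>m. u m - v m) = root_form f u - root_form f v"
  by (cases f) simp

lemma root_form_scale [simp]: "root_form f (\<lambda>m. c * u m) = c * root_form f u"
  by (cases f) (simp add: algebra_simps)

lemma continuous_on_root_form [continuous_intros]: "continuous_on S (root_form f)"
proof -
  obtain b i j where "f = (b, i, j)" by (cases f)
  then show ?thesis
    by (cases b) (auto intro!: continuous_intros continuous_on_subset[OF continuous_on_product_coordinates])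
qed

definition specializes :: "nat \<Rightarrow> (nat \<Rightarrow> real) \<Rightarrow> (nat \<Rightarrow> real) \<Rightarrow> bool" where
  "specializes n x y \<longleftrightarrow> (\<forall>f\<in>root_indices n. weakly_same_sign (root_form f x) (root_form f y))"

definition same_signs :: "nat \<Rightarrow> (nat \<Rightarrow> real) \<Rightarrow> (nat \<Rightarrow> real) \<Rightarrow> bool" where
  "same_signs n x y \<longleftrightarrow> (\<forall>f\<in>root_indices n. sgn (root_form f x) = sgn (root_form f y))"

definition face_cone :: "nat \<Rightarrow> (nat \<Rightarrow> real) \<Rightarrow> (nat \<Rightarrow> real) set" where
  "face_cone n x = {y \<in> Rn n. specializes n x y}"

definition sign_cell :: "nat \<Rightarrow> (nat \<Rightarrow> real) \<Rightarrow> (nat \<Rightarrow> real) set" where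
  "sign_cell n x = {y \<in> Rn n. same_signs n x y}"

lemma specializesD:
  assumes "specializes n x y" "i < n" "j < n"
  shows "weakly_same_sign (x i + x j) (y i + y j)" "weakly_same_sign (x i - x j) (y i - y j)"
proof -
  have forms: "weakly_same_sign (root_form (b, i, j) x) (root_form (b, i, j) y)" if "b \<or> i \<noteq> j" for b
    using assms that unfolding specializes_def root_indices_def by blast
  from forms[of True] show "weakly_same_sign (x i + x j) (y i + y j)" by simp
  from forms[of False] show "weakly_same_sign (x i - x j) (y i - y j)"
    by (cases "i = j") (auto simp: weakly_same_sign_refl)
qed

lemma same_signsD:
  assumes "same_signs n x y" "i < n" "j < n"
  shows "sgn (x i + x j) = sgn (y i + y j)" "sgn (x i - x j) = sgn (y i - y j)"
proof -
  have forms: "sgn (root_form (b, i, j) x) = sgn (root_form (b, i, j) y)" if "b \<or> i \<noteq> j" for b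
    using assms that unfolding same_signs_def root_indices_def by blast
  from forms[of True] show "sgn (x i + x j) = sgn (y i + y j)" by simp
  from forms[of False] show "sgn (x i - x j) = sgn (y i - y j)" by (cases "i = j") auto
qed

lemma specializes_refl: "specializes n x x"
  by (simp add: specializes_def weakly_same_sign_refl)

lemma specializes_trans: "specializes n x y \<Longrightarrow> specializes n y z \<Longrightarrow> specializes n x z"
  unfolding specializes_def by (meson weakly_same_sign_trans)

lemma specializes_if_same_signs: "same_signs n x y \<Longrightarrow> specializes n x y"
  unfolding same_signs_def specializes_def by (simp add: weakly_same_sign_if_sgn_eq)

lemma specializes_cong: "same_signs n x x' \<Longrightarrow> specializes n x y = specializes n x' y"
  unfolding same_signs_def specializes_def using weakly_same_sign_cong by metis

lemma face_cone_cong: "same_signs n x x' \<Longrightarrow> face_cone n x = face_cone n x'"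
  unfolding face_cone_def using specializes_cong by blast

lemma mem_face_cone_self: "x \<in> Rn n \<Longrightarrow> x \<in> face_cone n x"
  by (simp add: face_cone_def specializes_refl)

lemma same_signs_if_face_cone_eq:
  assumes "x \<in> Rn n" "y \<in> Rn n" "face_cone n x = face_cone n y"
  shows "same_signs n x y"
proof -
  have "specializes n y x" "specializes n x y"
    using assms mem_face_cone_self unfolding face_cone_def by blast+
  then show ?thesis
    unfolding specializes_def same_signs_def using weakly_same_sign_antisym by metis
qed

lemma sign_cell_subset_face_cone: "sign_cell n x \<subseteq> face_cone n x"
  unfolding sign_cell_def face_cone_def using specializes_if_same_signs by blast

lemma face_cone_subset_Wcl:
  assumes "x \<in> Wcl n"
  shows "face_cone n x \<subseteq> Wcl n"
proof
  fix y assume y: "y \<in> face_cone n x"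
  have "y j \<le> y i" if "i \<le> j" "j < n" for i j
  proof -
    have "x j \<le> x i" using assms that unfolding Wcl_def by auto
    moreover have "weakly_same_sign (x i - x j) (y i - y j)"
      using y that specializesD(2)[of n x y i j] by (simp add: face_cone_def)
    ultimately show ?thesis unfolding weakly_same_sign_def by (cases "x i = x j") auto
  qed
  then show "y \<in> Wcl n" using y unfolding Wcl_def face_cone_def by auto
qed

lemma closed_Rn: "closed (Rn n)"
proof -
  have "Rn n = (\<Inter>i\<in>{n..}. {x. x i = 0})" unfolding Rn_def by auto
  then show ?thesis
    by (auto intro!: closed_INT closed_Collect_eq continuous_on_product_coordinates continuous_on_const)
qed

lemma closed_face_cone: "closed (face_cone n x)"
proof -
  have closed_weakly_same_sign: "closed {y. weakly_same_sign a (f y)}"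
    if "continuous_on UNIV f" for a and f :: "(nat \<Rightarrow> real) \<Rightarrow> real"
  proof -
    have "{y. weakly_same_sign a (f y)} =
          (if a = 0 then {y. f y = 0} else if a > 0 then {y. 0 \<le> f y} else {y. f y \<le> 0})"
      by (auto simp: weakly_same_sign_def)
    then show ?thesis
      using that by (simp add: closed_Collect_eq closed_Collect_le continuous_on_const)
  qed
  have "face_cone n x = Rn n \<inter> (\<Inter>f\<in>root_indices n. {y. weakly_same_sign (root_form f x) (root_form f y)})"
    unfolding face_cone_def specializes_def by auto
  then show ?thesis
    by (auto intro!: closed_Int closed_Rn closed_INT closed_weakly_same_sign continuous_on_root_form)
qed

section \<open>Chambers\<close>

definition generic :: "nat \<Rightarrow> (nat \<Rightarrow> real) \<Rightarrow> bool" where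
  "generic n x \<longleftrightarrow> x \<in> W0 n - \<Union>(arr_hyps n)"

lemma generic_iff: "generic n x \<longleftrightarrow> x \<in> W0 n \<and> (\<forall>i<n. \<forall>j<n. x i + x j \<noteq> 0)"
proof -
  have "x \<in> \<Union>(arr_hyps n) \<longleftrightarrow> (\<exists>i<n. \<exists>j<n. x i + x j = 0)" if "x \<in> Rn n"
  proof
    assume "x \<in> \<Union>(arr_hyps n)"
    then obtain i j where "i \<le> j" "j < n" "x \<in> lam_perp n i j"
      unfolding arr_hyps_def by blast
    then have "i < n \<and> j < n \<and> x i + x j = 0"
      by (auto simp: lam_perp_def split: if_splits)
    then show "\<exists>i<n. \<exists>j<n. x i + x j = 0" by blast
  next
    assume "\<exists>i<n. \<exists>j<n. x i + x j = 0"
    then obtain i j where ij: "i \<le> j" "j < n" "x i + x j = 0"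
      by (metis add.commute le_cases)
    then have "x \<in> lam_perp n i j" using that by (auto simp: lam_perp_def)
    then show "x \<in> \<Union>(arr_hyps n)" using ij unfolding arr_hyps_def by blast
  qed
  then show ?thesis unfolding generic_def W0_def by blast
qed

lemma generic_W0: "generic n x \<Longrightarrow> x \<in> W0 n"
  by (simp add: generic_iff)

lemma W0_subset_Wcl: "W0 n \<subseteq> Wcl n"
  unfolding W0_def Wcl_def by (auto simp: le_less)

lemma W0_subset_Rn: "W0 n \<subseteq> Rn n"
  unfolding W0_def by auto

lemma generic_iff_root_forms:
  assumes "x \<in> Wcl n"
  shows "generic n x \<longleftrightarrow> (\<forall>f\<in>root_indices n. root_form f x \<noteq> 0)"
proof -
  have "x j < x i \<longleftrightarrow> x i \<noteq> x j" if "i < j" "j < n" for i j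
  proof -
    have "x j \<le> x i" using assms that unfolding Wcl_def by auto
    then show ?thesis by auto
  qed
  then have "x \<in> W0 n \<longleftrightarrow> (\<forall>i j. i < j \<and> j < n \<longrightarrow> x i \<noteq> x j)"
    using assms unfolding Wcl_def W0_def by blast
  moreover have "(\<forall>f\<in>root_indices n. root_form f x \<noteq> 0) \<longleftrightarrow>
      (\<forall>i<n. \<forall>j<n. x i + x j \<noteq> 0) \<and> (\<forall>i j. i < j \<and> j < n \<longrightarrow> x i \<noteq> x j)"
  proof
    assume nz: "\<forall>f\<in>root_indices n. root_form f x \<noteq> 0"
    show "(\<forall>i<n. \<forall>j<n. x i + x j \<noteq> 0) \<and> (\<forall>i j. i < j \<and> j < n \<longrightarrow> x i \<noteq> x j)"
    proof (intro conjI allI impI)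
      fix i j assume "i < n" "j < n"
      then have "(True, i, j) \<in> root_indices n" by (simp add: root_indices_def)
      then show "x i + x j \<noteq> 0" using nz by fastforce
    next
      fix i j assume "i < j \<and> j < n"
      then have "(False, i, j) \<in> root_indices n" by (auto simp: root_indices_def)
      then show "x i \<noteq> x j" using nz by fastforce
    qed
  next
    assume sums: "(\<forall>i<n. \<forall>j<n. x i + x j \<noteq> 0) \<and> (\<forall>i j. i < j \<and> j < n \<longrightarrow> x i \<noteq> x j)"
    show "\<forall>f\<in>root_indices n. root_form f x \<noteq> 0"
    proof
      fix f assume "f \<in> root_indices n"
      then obtain b i j where f: "f = (b, i, j)" "i < n" "j < n" "b \<or> i \<noteq> j"
        by (auto simp: root_indices_def)
      consider "b" | "\<not> b" "i < j" | "\<not> b" "j < i" using f(4) by (meson linorder_neqE_nat)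
      then show "root_form f x \<noteq> 0" using sums f(1-3) by cases force+
    qed
  qed
  ultimately show ?thesis unfolding generic_iff by blast
qed

lemma generic_root_form_nonzero: "generic n x \<Longrightarrow> f \<in> root_indices n \<Longrightarrow> root_form f x \<noteq> 0"
  using generic_iff_root_forms generic_W0 W0_subset_Wcl by blast

lemma generic_if_same_signs:
  assumes "generic n x" "y \<in> Rn n" "same_signs n x y"
  shows "generic n y"
proof -
  have "y \<in> Wcl n" unfolding Wcl_def
  proof (intro CollectI conjI allI impI)
    fix i j assume ij: "i \<le> j \<and> j < n"
    then have "sgn (x i - x j) \<ge> 0"
      using generic_W0[OF assms(1)] by (auto simp: W0_def sgn_if le_less)
    then show "y j \<le> y i" using same_signsD(2)[OF assms(3), of i j] ij
      by (auto simp: sgn_if split: if_splits)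
  qed (fact assms)
  moreover have "root_form f y \<noteq> 0" if "f \<in> root_indices n" for f
    using generic_root_form_nonzero[OF assms(1) that] assms(3) that
    unfolding same_signs_def by (metis sgn_0_0)
  ultimately show ?thesis using generic_iff_root_forms by blast
qed

lemma same_signs_segment:
  assumes "same_signs n x y" "t \<in> {0..1}"
  shows "same_signs n x (\<lambda>m. (1 - t) * x m + t * y m)"
  using assms sgn_convex_comb unfolding same_signs_def by auto

lemma same_signs_segment_from_specialization:
  assumes "specializes n x y" "t \<in> {0<..1}"
  shows "same_signs n x (\<lambda>m. (1 - t) * y m + t * x m)"
  unfolding same_signs_def
proof
  fix f assume "f \<in> root_indices n"
  then have "weakly_same_sign (root_form f x) (root_form f y)"
    using assms(1) unfolding specializes_def by blast
  then show "sgn (root_form f x) = sgn (root_form f (\<lambda>m. (1 - t) * y m + t * x m))"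
    using assms(2) sgn_convex_comb_weakly_same_sign by simp
qed

lemma Rn_lin_comb: "x \<in> Rn n \<Longrightarrow> y \<in> Rn n \<Longrightarrow> (\<lambda>m. s * x m + t * y m) \<in> Rn n"
  by (simp add: Rn_def)

lemma connected_component_eq_sign_cell:
  assumes x: "generic n x"
  shows "connected_component_set (W0 n - \<Union>(arr_hyps n)) x = sign_cell n x"
    (is "connected_component_set ?S x = _")
proof
  have S: "z \<in> ?S \<longleftrightarrow> generic n z" for z unfolding generic_def ..
  show "connected_component_set ?S x \<subseteq> sign_cell n x"
  proof
    fix y assume y: "y \<in> connected_component_set ?S x"
    let ?C = "connected_component_set ?S x"
    have C_generic: "\<And>z. z \<in> ?C \<Longrightarrow> generic n z"
      using connected_component_subset[of ?S x] S by blast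
    have C: "connected ?C" "x \<in> ?C"
      using x S by (auto simp: connected_component_refl_eq)
    have "sgn (root_form f x) = sgn (root_form f y)" if "f \<in> root_indices n" for f
    proof -
      have "\<forall>z\<in>?C. root_form f z \<noteq> 0"
        using C_generic generic_root_form_nonzero that by blast
      then show ?thesis
        by (rule sgn_constant_on_connected[OF C(1) continuous_on_root_form _ C(2) y])
    qed
    moreover have "y \<in> Rn n" using C_generic[OF y] generic_W0 W0_subset_Rn by blast
    ultimately show "y \<in> sign_cell n x" by (simp add: sign_cell_def same_signs_def)
  qed
  show "sign_cell n x \<subseteq> connected_component_set ?S x"
  proof
    fix y assume "y \<in> sign_cell n x"
    then have y: "y \<in> Rn n" "same_signs n x y" by (auto simp: sign_cell_def)
    have xR: "x \<in> Rn n" using x generic_W0 W0_subset_Rn by blast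
    define p where "p t = (\<lambda>m. (1 - t) * x m + t * y m)" for t
    have "generic n (p t)" if "t \<in> {0..1}" for t
      unfolding p_def
      by (rule generic_if_same_signs[OF x Rn_lin_comb[OF xR y(1)] same_signs_segment[OF y(2) that]])
    then have "p ` {0..1} \<subseteq> ?S" unfolding generic_def by blast
    moreover have "connected (p ` {0..1})"
      by (rule connected_continuous_image) (auto simp: p_def intro!: continuous_intros)
    ultimately have "p ` {0..1} \<subseteq> connected_component_set ?S (p 0)"
      by (intro connected_component_maximal) auto
    moreover have "p 0 = x" "p 1 = y" by (auto simp: p_def)
    ultimately show "y \<in> connected_component_set ?S x" by force
  qed
qed

lemma closure_sign_cell:
  assumes x: "generic n x"
  shows "closure (sign_cell n x) = face_cone n x"
proof
  show "closure (sign_cell n x) \<subseteq> face_cone n x"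
    by (rule closure_minimal[OF sign_cell_subset_face_cone closed_face_cone])
  show "face_cone n x \<subseteq> closure (sign_cell n x)"
  proof
    fix y assume "y \<in> face_cone n x"
    then have y: "y \<in> Rn n" "specializes n x y" by (auto simp: face_cone_def)
    have xR: "x \<in> Rn n" using x generic_W0 W0_subset_Rn by blast
    define p where "p t = (\<lambda>m. (1 - t) * y m + t * x m)" for t
    have "p ` {0<..1} \<subseteq> closure (sign_cell n x)"
      using same_signs_segment_from_specialization[OF y(2)] Rn_lin_comb[OF y(1) xR] closure_subset
      by (fastforce simp: p_def sign_cell_def)
    then have "p ` closure {0<..1} \<subseteq> closure (sign_cell n x)"
      by (intro image_closure_subset) (auto simp: p_def intro!: continuous_intros)
    moreover have "p 0 = y" by (simp add: p_def)
    ultimately show "y \<in> closure (sign_cell n x)" by force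
  qed
qed

lemma chambers_eq: "chambers n = face_cone n ` {x. generic n x}"
proof -
  have "chambers n = (\<lambda>x. closure (connected_component_set (W0 n - \<Union>(arr_hyps n)) x)) ` {x. generic n x}"
    unfolding chambers_def generic_def by blast
  also have "\<dots> = face_cone n ` {x. generic n x}"
    by (rule image_cong) (simp_all add: connected_component_eq_sign_cell closure_sign_cell)
  finally show ?thesis .
qed

section \<open>Faces\<close>

definition pairing :: "nat \<Rightarrow> (nat \<Rightarrow> real) \<Rightarrow> (nat \<Rightarrow> real) \<Rightarrow> real" where
  "pairing n a y = (\<Sum>i<n. a i * y i)"

lemma pairing_add [simp]: "pairing n a (\<lambda>m. u m + v m) = pairing n a u + pairing n a v"
  by (simp add: pairing_def algebra_simps sum.distrib)

lemma pairing_diff [simp]: "pairing n a (\<lambda>m. u m - v m) = pairing n a u - pairing n a v"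
  by (simp add: pairing_def algebra_simps sum_subtractf)

lemma pairing_scale [simp]: "pairing n a (\<lambda>m. c * u m) = c * pairing n a u"
  by (simp add: pairing_def algebra_simps sum_distrib_left)

lemma supporting_hyperplane_iff:
  "supporting_hyperplane n C H \<longleftrightarrow>
     (\<exists>a\<in>Rn n. a \<noteq> 0 \<and> H = {x \<in> Rn n. pairing n a x = 0} \<and>
        C \<subseteq> {x. pairing n a x \<ge> 0} \<and> C \<inter> H \<noteq> {})"
  unfolding supporting_hyperplane_def pairing_def ..

definition root_coeffs :: "bool \<times> nat \<times> nat \<Rightarrow> nat \<Rightarrow> real" where
  "root_coeffs f m = (case f of (b, i, j) \<Rightarrow>
     (if m = i then 1 else 0) + (if b then 1 else -1) * (if m = j then 1 else 0))"

lemma pairing_root_coeffs: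
  assumes "f \<in> root_indices n"
  shows "pairing n (root_coeffs f) y = root_form f y"
proof -
  obtain b i j where f: "f = (b, i, j)" "i < n" "j < n" using assms by (auto simp: root_indices_def)
  have delta: "(\<Sum>m<n. (if m = k then 1 else 0) * y m) = y k" if "k < n" for k
    using that by (simp add: if_distrib[of "\<lambda>c. c * _"] cong: if_cong)
  have "pairing n (root_coeffs f) y =
      (\<Sum>m<n. (if m = i then 1 else 0) * y m) + (if b then 1 else -1) * (\<Sum>m<n. (if m = j then 1 else 0) * y m)"
    by (simp add: f(1) pairing_def root_coeffs_def distrib_right sum.distrib sum_distrib_left mult.assoc)
  then show ?thesis using f by (simp add: delta)
qed

lemma root_coeffs_in_Rn: "f \<in> root_indices n \<Longrightarrow> root_coeffs f \<in> Rn n"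
  by (auto simp: root_indices_def root_coeffs_def Rn_def)

lemma face_cone_mono: "z \<in> face_cone n x \<Longrightarrow> face_cone n z \<subseteq> face_cone n x"
  unfolding face_cone_def using specializes_trans by blast

lemma small_step_keeps_signs:
  "\<exists>e>0. \<forall>f\<in>root_indices n. root_form f z \<noteq> 0 \<longrightarrow>
     sgn (root_form f z + e * root_form f v) = sgn (root_form f z)"
proof -
  have keep: "\<forall>\<^sub>F e in at_right 0. sgn (c + e * d) = sgn c" if "c \<noteq> (0::real)" for c d
  proof -
    have lim: "((\<lambda>e. c + e * d) \<longlongrightarrow> c) (at_right 0)"
      by (auto intro!: tendsto_eq_intros)
    show ?thesis
    proof (cases "c > 0")
      case True
      show ?thesis using order_tendstoD(1)[OF lim True] by eventually_elim (use True in simp)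
    next
      case False
      with that have "c < 0" by simp
      show ?thesis using order_tendstoD(2)[OF lim \<open>c < 0\<close>] by eventually_elim (use \<open>c < 0\<close> in simp)
    qed
  qed
  have "\<forall>\<^sub>F e in at_right 0. 0 < e \<and> (\<forall>f\<in>root_indices n. root_form f z \<noteq> 0 \<longrightarrow>
      sgn (root_form f z + e * root_form f v) = sgn (root_form f z))"
    using keep by (intro eventually_conj eventually_at_right_less eventually_ball_finite finite_root_indices)
      (auto intro: eventually_mono)
  then show ?thesis
    using eventually_happens'[OF trivial_limit_at_right_real] by blast
qed

definition root_support :: "nat \<Rightarrow> (nat \<Rightarrow> real) \<Rightarrow> (bool \<times> nat \<times> nat) set" where
  "root_support n y = {f \<in> root_indices n. root_form f y \<noteq> 0}"

lemma finite_root_support: "finite (root_support n y)"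
  using finite_root_indices by (simp add: root_support_def)

lemma face_cone_add:
  assumes "y \<in> face_cone n x" "z \<in> face_cone n x"
  shows "(\<lambda>m. y m + z m) \<in> face_cone n x"
    and "root_support n (\<lambda>m. y m + z m) = root_support n y \<union> root_support n z"
proof -
  have forms: "weakly_same_sign (root_form f x) (root_form f y)"
    "weakly_same_sign (root_form f x) (root_form f z)" if "f \<in> root_indices n" for f
    using assms that by (auto simp: face_cone_def specializes_def)
  have "specializes n x (\<lambda>m. y m + z m)"
    unfolding specializes_def using forms by (auto intro: weakly_same_sign_add simp del: root_form.simps)
  then show "(\<lambda>m. y m + z m) \<in> face_cone n x" using assms by (simp add: face_cone_def Rn_def)
  have "root_form f y + root_form f z = 0 \<longleftrightarrow> root_form f y = 0 \<and> root_form f z = 0"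
    if "f \<in> root_indices n" for f
    using forms[OF that] by (rule weakly_same_sign_add_eq_0)
  then show "root_support n (\<lambda>m. y m + z m) = root_support n y \<union> root_support n z"
    by (auto simp: root_support_def simp del: root_form.simps)
qed

lemma specializes_if_root_support_subset:
  assumes "y \<in> face_cone n x" "z \<in> face_cone n x" "root_support n y \<subseteq> root_support n z"
  shows "specializes n z y"
  unfolding specializes_def
proof
  fix f assume f: "f \<in> root_indices n"
  show "weakly_same_sign (root_form f z) (root_form f y)"
  proof (cases "root_form f z = 0")
    case True
    then have "root_form f y = 0" using assms(3) f by (auto simp: root_support_def)
    then show ?thesis by (simp add: weakly_same_sign_0)
  next
    case False
    have "sgn (root_form f x) = sgn (root_form f z)"
      using assms(2) f False sgn_eq_if_weakly_same_sign by (auto simp: face_cone_def specializes_def)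
    moreover have "weakly_same_sign (root_form f x) (root_form f y)"
      using assms(1) f by (auto simp: face_cone_def specializes_def)
    ultimately show ?thesis using weakly_same_sign_cong by metis
  qed
qed

text \<open>Moving from \<open>z\<close> slightly away from \<open>y\<close> stays in the cone of \<open>z\<close>, so a linear form that
  is nonnegative on the cone and vanishes at \<open>z\<close> must vanish at \<open>y\<close>.\<close>

lemma face_cone_subset_zero_set:
  assumes z: "z \<in> face_cone n x" "pairing n a z = 0"
    and nonneg: "face_cone n x \<subseteq> {y. pairing n a y \<ge> 0}"
  shows "face_cone n z \<subseteq> {y. pairing n a y = 0}"
proof
  fix y assume y: "y \<in> face_cone n z"
  obtain e where e: "e > 0" "\<forall>f\<in>root_indices n. root_form f z \<noteq> 0 \<longrightarrow>
      sgn (root_form f z + e * root_form f (\<lambda>m. z m - y m)) = sgn (root_form f z)"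
    using small_step_keeps_signs by blast
  define w where "w = (\<lambda>m. z m + e * (z m - y m))"
  have "specializes n z w"
    unfolding specializes_def
  proof
    fix f assume f: "f \<in> root_indices n"
    show "weakly_same_sign (root_form f z) (root_form f w)"
    proof (cases "root_form f z = 0")
      case True
      then have "root_form f y = 0"
        using y f by (auto simp: face_cone_def specializes_def weakly_same_sign_def)
      with True show ?thesis by (simp add: w_def weakly_same_sign_refl)
    next
      case False
      then show ?thesis using e(2) f by (simp add: w_def weakly_same_sign_if_sgn_eq)
    qed
  qed
  moreover have "w \<in> Rn n" using y z(1) by (simp add: w_def face_cone_def Rn_def)
  ultimately have "w \<in> face_cone n x" using face_cone_mono[OF z(1)] by (auto simp: face_cone_def)
  then have "0 \<le> pairing n a w" using nonneg by blast
  also have "pairing n a w = - e * pairing n a y" using z(2) by (simp add: w_def algebra_simps)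
  finally have "pairing n a y \<le> 0" using e(1) by (simp add: mult_le_0_iff)
  moreover have "pairing n a y \<ge> 0" using y face_cone_mono[OF z(1)] nonneg by blast
  ultimately show "y \<in> {y. pairing n a y = 0}" by simp
qed

text \<open>A point of the exposed face with maximal support sees all of it.\<close>

lemma exposed_face_eq_face_cone:
  assumes nonneg: "face_cone n x \<subseteq> {y. pairing n a y \<ge> 0}"
    and nonempty: "face_cone n x \<inter> {y. pairing n a y = 0} \<noteq> {}"
  shows "\<exists>z\<in>face_cone n x. face_cone n x \<inter> {y. pairing n a y = 0} = face_cone n z"
proof -
  define K where "K = face_cone n x \<inter> {y. pairing n a y = 0}"
  have K_add: "(\<lambda>m. y m + z m) \<in> K" if "y \<in> K" "z \<in> K" for y z
    using that face_cone_add(1) by (auto simp: K_def)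
  obtain z where z: "z \<in> K" and z_max: "\<And>y. y \<in> K \<Longrightarrow> card (root_support n y) \<le> card (root_support n z)"
  proof -
    obtain z0 where "z0 \<in> K" using nonempty unfolding K_def by blast
    moreover have "\<forall>y. y \<in> K \<longrightarrow> card (root_support n y) < Suc (card (root_indices n))"
      using card_mono[OF finite_root_indices] by (auto simp: root_support_def less_Suc_eq_le)
    ultimately show ?thesis
      using that ex_has_greatest_nat[of "\<lambda>y. y \<in> K" z0 "\<lambda>y. card (root_support n y)"] by blast
  qed
  have "K \<subseteq> face_cone n z"
  proof
    fix y assume y: "y \<in> K"
    have zy: "z \<in> face_cone n x" "y \<in> face_cone n x" using z y by (auto simp: K_def)
    have "card (root_support n z \<union> root_support n y) \<le> card (root_support n z)"
      using z_max[OF K_add[OF z y]] face_cone_add(2)[OF zy] by simp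
    then have "root_support n z = root_support n z \<union> root_support n y"
      by (intro card_seteq) (auto simp: finite_root_support)
    then have "specializes n z y"
      using specializes_if_root_support_subset[OF zy(2,1)] by blast
    then show "y \<in> face_cone n z" using y by (simp add: K_def face_cone_def)
  qed
  moreover have "face_cone n z \<subseteq> K"
    using face_cone_mono face_cone_subset_zero_set[OF _ _ nonneg] z by (auto simp: K_def)
  ultimately show ?thesis using z unfolding K_def by blast
qed

lemma face_of_supporting_hyperplane:
  assumes "x \<in> Wcl n" "supporting_hyperplane n (face_cone n x) H"
  shows "\<exists>z\<in>Wcl n. face_cone n x \<inter> H = face_cone n z"
proof -
  obtain a where a: "H = {y \<in> Rn n. pairing n a y = 0}"
    "face_cone n x \<subseteq> {y. pairing n a y \<ge> 0}" "face_cone n x \<inter> H \<noteq> {}"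
    using assms(2) unfolding supporting_hyperplane_iff by blast
  have "face_cone n x \<inter> H = face_cone n x \<inter> {y. pairing n a y = 0}"
    using a(1) by (auto simp: face_cone_def)
  then show ?thesis
    using exposed_face_eq_face_cone[OF a(2)] a(3) face_cone_subset_Wcl[OF assms(1)] by auto
qed

lemma Wcl_subset_Rn: "Wcl n \<subseteq> Rn n"
  by (auto simp: Wcl_def)

lemma face_cone_subset_Rn: "face_cone n x \<subseteq> Rn n"
  by (auto simp: face_cone_def)

lemma Wcl_add_scaled: "y \<in> Wcl n \<Longrightarrow> z \<in> Wcl n \<Longrightarrow> c \<ge> 0 \<Longrightarrow> (\<lambda>m. y m + c * z m) \<in> Wcl n"
  by (auto simp: Wcl_def Rn_def intro!: add_mono mult_left_mono)

lemma generic_perturbation: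
  assumes z: "z \<in> Wcl n"
  obtains x where "generic n x"
    "\<And>f. f \<in> root_indices n \<Longrightarrow> root_form f z \<noteq> 0 \<Longrightarrow> sgn (root_form f x) = sgn (root_form f z)"
proof -
  define w where "w i = (if i < n then real (n - i) else 0)" for i
  have w: "w \<in> Wcl n" by (auto simp: w_def Wcl_def Rn_def)
  have w_nonzero: "root_form f w \<noteq> 0" if "f \<in> root_indices n" for f
    using that by (auto simp: root_indices_def w_def split: if_splits)
  obtain d where d: "d > 0" "\<forall>f\<in>root_indices n. root_form f z \<noteq> 0 \<longrightarrow>
      sgn (root_form f z + d * root_form f w) = sgn (root_form f z)"
    using small_step_keeps_signs by blast
  define x where "x = (\<lambda>m. z m + d * w m)"
  have signs: "sgn (root_form f x) = sgn (root_form f z)" if "f \<in> root_indices n" "root_form f z \<noteq> 0" for f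
    using d(2) that by (simp add: x_def)
  have "root_form f x \<noteq> 0" if f: "f \<in> root_indices n" for f
  proof (cases "root_form f z = 0")
    case True
    then show ?thesis using w_nonzero[OF f] d(1) by (simp add: x_def)
  next
    case False
    then show ?thesis using signs[OF f] by (metis sgn_0_0)
  qed
  moreover have "x \<in> Wcl n" using Wcl_add_scaled[OF z w] d(1) by (simp add: x_def)
  ultimately have "generic n x" using generic_iff_root_forms by blast
  then show ?thesis using that signs by blast
qed

lemma face_cone_eq_vanishing_locus:
  assumes x: "generic n x" and z: "z \<in> Rn n"
    and signs: "\<And>f. f \<in> root_indices n \<Longrightarrow> root_form f z \<noteq> 0 \<Longrightarrow> sgn (root_form f x) = sgn (root_form f z)"
  shows "face_cone n z = {y \<in> face_cone n x. \<forall>f\<in>root_indices n. root_form f z = 0 \<longrightarrow> root_form f y = 0}"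
proof
  have "specializes n x z"
    unfolding specializes_def using signs weakly_same_sign_if_sgn_eq weakly_same_sign_0 by metis
  then have "face_cone n z \<subseteq> face_cone n x"
    using z face_cone_mono by (simp add: face_cone_def)
  then show "face_cone n z \<subseteq> {y \<in> face_cone n x. \<forall>f\<in>root_indices n. root_form f z = 0 \<longrightarrow> root_form f y = 0}"
    by (auto simp: face_cone_def specializes_def weakly_same_sign_def simp del: root_form.simps)
next
  show "{y \<in> face_cone n x. \<forall>f\<in>root_indices n. root_form f z = 0 \<longrightarrow> root_form f y = 0} \<subseteq> face_cone n z"
  proof clarify
    fix y assume y: "y \<in> face_cone n x" and vanish: "\<forall>f\<in>root_indices n. root_form f z = 0 \<longrightarrow> root_form f y = 0"
    have "weakly_same_sign (root_form f z) (root_form f y)" if f: "f \<in> root_indices n" for f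
    proof (cases "root_form f z = 0")
      case True
      then show ?thesis using vanish f by (simp add: weakly_same_sign_refl)
    next
      case False
      moreover have "weakly_same_sign (root_form f x) (root_form f y)"
        using y f by (simp add: face_cone_def specializes_def)
      ultimately show ?thesis using signs[OF f] weakly_same_sign_cong by metis
    qed
    then show "y \<in> face_cone n z" using y by (simp add: face_cone_def specializes_def)
  qed
qed

lemma pairing_root_coeffs_sum:
  assumes "Z \<subseteq> root_indices n"
  shows "pairing n (\<lambda>m. \<Sum>f\<in>Z. c f * root_coeffs f m) y = (\<Sum>f\<in>Z. c f * root_form f y)"
proof -
  have "pairing n (\<lambda>m. \<Sum>f\<in>Z. c f * root_coeffs f m) y = (\<Sum>f\<in>Z. c f * pairing n (root_coeffs f) y)"
    unfolding pairing_def
    by (simp add: sum_distrib_left sum_distrib_right mult.assoc sum.swap[of _ Z])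
  also have "\<dots> = (\<Sum>f\<in>Z. c f * root_form f y)"
    using assms pairing_root_coeffs by (intro sum.cong) auto
  finally show ?thesis .
qed

lemma signed_vanishing_forms_cut_face_cone:
  assumes x: "generic n x" and z: "z \<in> Rn n"
    and signs: "\<And>f. f \<in> root_indices n \<Longrightarrow> root_form f z \<noteq> 0 \<Longrightarrow> sgn (root_form f x) = sgn (root_form f z)"
  defines "a \<equiv> \<lambda>m. \<Sum>f\<in>{f \<in> root_indices n. root_form f z = 0}. sgn (root_form f x) * root_coeffs f m"
  shows "face_cone n x \<subseteq> {y. pairing n a y \<ge> 0}"
    and "face_cone n x \<inter> {y \<in> Rn n. pairing n a y = 0} = face_cone n z"
proof -
  define Z where "Z = {f \<in> root_indices n. root_form f z = 0}"
  have finite_Z: "finite Z" using finite_root_indices by (simp add: Z_def)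
  have a_pairing: "pairing n a y = (\<Sum>f\<in>Z. sgn (root_form f x) * root_form f y)" for y
    unfolding a_def Z_def[symmetric] by (rule pairing_root_coeffs_sum) (auto simp: Z_def)
  have term_nonneg: "0 \<le> sgn (root_form f x) * root_form f y" if "y \<in> face_cone n x" "f \<in> Z" for f y
    using that weakly_same_sign_mult_sgn_nonneg by (simp add: face_cone_def specializes_def Z_def)
  show "face_cone n x \<subseteq> {y. pairing n a y \<ge> 0}"
    using term_nonneg by (auto simp: a_pairing intro: sum_nonneg)
  have vanish_iff: "pairing n a y = 0 \<longleftrightarrow> (\<forall>f\<in>Z. root_form f y = 0)" if "y \<in> face_cone n x" for y
  proof -
    have "sgn (root_form f x) \<noteq> 0" if "f \<in> Z" for f
      using generic_root_form_nonzero[OF x] that by (simp add: Z_def sgn_0_0)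
    then show ?thesis
      using sum_nonneg_eq_0_iff[OF finite_Z term_nonneg[OF that]] unfolding a_pairing by auto
  qed
  have "(\<forall>f\<in>Z. root_form f y = 0) \<longleftrightarrow> (\<forall>f\<in>root_indices n. root_form f z = 0 \<longrightarrow> root_form f y = 0)" for y
    by (auto simp: Z_def simp del: root_form.simps)
  then have "face_cone n z = {y \<in> face_cone n x. \<forall>f\<in>Z. root_form f y = 0}"
    using face_cone_eq_vanishing_locus[OF x z signs] by simp
  then show "face_cone n x \<inter> {y \<in> Rn n. pairing n a y = 0} = face_cone n z"
    using vanish_iff face_cone_subset_Rn[of n x] by auto
qed

lemma face_cone_in_faces:
  assumes z: "z \<in> Wcl n"
  shows "face_cone n z \<in> faces n"
proof (cases "generic n z")
  case True
  then show ?thesis using chambers_eq unfolding faces_def by blast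
next
  case False
  obtain x where x: "generic n x"
    and signs: "\<And>f. f \<in> root_indices n \<Longrightarrow> root_form f z \<noteq> 0 \<Longrightarrow> sgn (root_form f x) = sgn (root_form f z)"
    using generic_perturbation[OF z] by blast
  have zR: "z \<in> Rn n" using z Wcl_subset_Rn by blast
  define Z where "Z = {f \<in> root_indices n. root_form f z = 0}"
  define a where "a = (\<lambda>m. \<Sum>f\<in>Z. sgn (root_form f x) * root_coeffs f m)"
  note cut = signed_vanishing_forms_cut_face_cone[OF x zR signs, folded Z_def, folded a_def]
  obtain f0 where "f0 \<in> root_indices n" "root_form f0 z = 0"
    using False generic_iff_root_forms[OF z] by blast
  then have f0: "f0 \<in> Z" "root_form f0 x \<noteq> 0"
    using generic_root_form_nonzero[OF x] by (auto simp: Z_def simp del: root_form.simps)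
  have "pairing n a x = (\<Sum>f\<in>Z. sgn (root_form f x) * root_form f x)"
    unfolding a_def by (rule pairing_root_coeffs_sum) (auto simp: Z_def)
  also have "\<dots> > 0"
    using f0 finite_root_indices by (intro sum_pos2[OF _ f0(1)]) (auto simp: Z_def sgn_if)
  finally have "a \<noteq> 0" by (auto simp: pairing_def)
  moreover have "a \<in> Rn n"
  proof -
    have "root_coeffs f m = 0" if "f \<in> Z" "n \<le> m" for f m
      using root_coeffs_in_Rn[of f n] that by (auto simp: Z_def Rn_def)
    then show ?thesis by (simp add: a_def Rn_def)
  qed
  moreover have "face_cone n x \<inter> {y \<in> Rn n. pairing n a y = 0} \<noteq> {}"
    using cut(2) mem_face_cone_self[OF zR] by blast
  ultimately have "supporting_hyperplane n (face_cone n x) {y \<in> Rn n. pairing n a y = 0}"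
    unfolding supporting_hyperplane_iff using cut(1) by blast
  moreover have "face_cone n x \<in> chambers n" using x chambers_eq by blast
  ultimately have "face_cone n x \<inter> {y \<in> Rn n. pairing n a y = 0} \<in> faces n"
    unfolding faces_def by blast
  then show ?thesis using cut(2) by simp
qed

lemma chambers_subset: "chambers n \<subseteq> face_cone n ` Wcl n"
  unfolding chambers_eq using generic_W0 W0_subset_Wcl by blast

lemma faces_eq: "faces n = face_cone n ` Wcl n"
proof
  show "faces n \<subseteq> face_cone n ` Wcl n"
  proof
    fix F assume "F \<in> faces n"
    then consider "F \<in> chambers n"
      | C H where "C \<in> chambers n" "supporting_hyperplane n C H" "F = C \<inter> H"
      unfolding faces_def by blast
    then show "F \<in> face_cone n ` Wcl n"
    proof cases
      case 1
      then show ?thesis using chambers_subset by blast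
    next
      case (2 C H)
      then obtain x where "x \<in> Wcl n" "C = face_cone n x" using chambers_subset by blast
      then show ?thesis using face_of_supporting_hyperplane 2 by blast
    qed
  qed
  show "face_cone n ` Wcl n \<subseteq> faces n" using face_cone_in_faces by blast
qed

section \<open>Signed ranks\<close>

lemma abs_le_abs_iff_sgn: "\<bar>a::real\<bar> \<le> \<bar>b\<bar> \<longleftrightarrow> sgn (a - b) * sgn (a + b) \<le> 0"
proof -
  have "sgn (a - b) * sgn (a + b) = sgn (a\<^sup>2 - b\<^sup>2)"
    by (simp add: sgn_mult[symmetric] power2_eq_square algebra_simps)
  then show ?thesis by (simp add: sgn_if abs_le_square_iff)
qed

lemma abs_eq_abs_iff_sgn: "\<bar>a::real\<bar> = \<bar>b\<bar> \<longleftrightarrow> sgn (a - b) = 0 \<or> sgn (a + b) = 0"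
  by (auto simp: sgn_0_0 abs_eq_iff)

text \<open>Rescaling the absolute values of \<open>a\<close> and \<open>b\<close> in an order-preserving way keeps the signs
  of \<open>a - b\<close> (and, applied to \<open>-b\<close>, of \<open>a + b\<close>).\<close>

lemma sgn_diff_rescaled:
  fixes a b ra rb :: real
  assumes "a = 0 \<Longrightarrow> ra = 0" "a \<noteq> 0 \<Longrightarrow> ra > 0" "b = 0 \<Longrightarrow> rb = 0" "b \<noteq> 0 \<Longrightarrow> rb > 0"
    "\<bar>a\<bar> < \<bar>b\<bar> \<Longrightarrow> ra < rb" "\<bar>b\<bar> < \<bar>a\<bar> \<Longrightarrow> rb < ra" "\<bar>a\<bar> = \<bar>b\<bar> \<Longrightarrow> ra = rb"
  shows "sgn (sgn a * ra - sgn b * rb) = sgn (a - b)"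
proof -
  have "a > 0 \<or> a = 0 \<or> a < 0" "b > 0 \<or> b = 0 \<or> b < 0" "a < b \<or> a = b \<or> b < a" by linarith+
  then show ?thesis using assms by (elim disjE) (simp_all add: abs_if)
qed

lemma card_image_eq_if_same_fibres:
  assumes "finite J" "\<forall>j\<in>J. \<forall>l\<in>J. f j = f l \<longleftrightarrow> h j = h l"
  shows "card (f ` J) = card (h ` J)"
  using assms
proof (induction J rule: finite_induct)
  case (insert a J)
  then have "f a \<in> f ` J \<longleftrightarrow> h a \<in> h ` J" by (auto simp: image_iff)
  with insert show ?case by (auto simp: card_insert_if)
qed simp

definition abs_values :: "nat \<Rightarrow> (nat \<Rightarrow> real) \<Rightarrow> real set" where
  "abs_values n x = (\<lambda>j. \<bar>x j\<bar>) ` {j. j < n \<and> x j \<noteq> 0}"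

definition abs_rank :: "nat \<Rightarrow> (nat \<Rightarrow> real) \<Rightarrow> nat \<Rightarrow> nat" where
  "abs_rank n x i = card {a \<in> abs_values n x. a \<le> \<bar>x i\<bar>}"

definition signed_rank :: "nat \<Rightarrow> (nat \<Rightarrow> real) \<Rightarrow> nat \<Rightarrow> real" where
  "signed_rank n x i = sgn (x i) * real (abs_rank n x i)"

lemma finite_abs_values: "finite (abs_values n x)"
  by (simp add: abs_values_def)

lemma abs_rank_eq_card_image:
  "abs_rank n x i = card ((\<lambda>j. \<bar>x j\<bar>) ` {j. j < n \<and> x j \<noteq> 0 \<and> \<bar>x j\<bar> \<le> \<bar>x i\<bar>})"
proof -
  have "{a \<in> abs_values n x. a \<le> \<bar>x i\<bar>} = (\<lambda>j. \<bar>x j\<bar>) ` {j. j < n \<and> x j \<noteq> 0 \<and> \<bar>x j\<bar> \<le> \<bar>x i\<bar>}"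
    by (auto simp: abs_values_def)
  then show ?thesis by (simp add: abs_rank_def)
qed

lemma same_signs_abs:
  assumes "same_signs n x y" "i < n" "j < n"
  shows "sgn (x i) = sgn (y i)" "\<bar>x i\<bar> \<le> \<bar>x j\<bar> \<longleftrightarrow> \<bar>y i\<bar> \<le> \<bar>y j\<bar>" "\<bar>x i\<bar> = \<bar>x j\<bar> \<longleftrightarrow> \<bar>y i\<bar> = \<bar>y j\<bar>"
proof -
  show "sgn (x i) = sgn (y i)" using same_signsD(1)[OF assms(1,2,2)] by (simp add: sgn_mult)
  have "sgn (x i - x j) = sgn (y i - y j)" "sgn (x i + x j) = sgn (y i + y j)"
    using same_signsD[OF assms] by simp_all
  then show "\<bar>x i\<bar> \<le> \<bar>x j\<bar> \<longleftrightarrow> \<bar>y i\<bar> \<le> \<bar>y j\<bar>" "\<bar>x i\<bar> = \<bar>x j\<bar> \<longleftrightarrow> \<bar>y i\<bar> = \<bar>y j\<bar>"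
    by (simp_all add: abs_le_abs_iff_sgn abs_eq_abs_iff_sgn)
qed

lemma signed_rank_same_signs:
  assumes "same_signs n x y" "i < n"
  shows "signed_rank n x i = signed_rank n y i"
proof -
  have nz: "x j \<noteq> 0 \<longleftrightarrow> y j \<noteq> 0" if "j < n" for j
    using same_signs_abs(1)[OF assms(1) that that] by (metis sgn_0_0)
  define J where "J = {j. j < n \<and> x j \<noteq> 0 \<and> \<bar>x j\<bar> \<le> \<bar>x i\<bar>}"
  have J: "J = {j. j < n \<and> y j \<noteq> 0 \<and> \<bar>y j\<bar> \<le> \<bar>y i\<bar>}"
    using nz same_signs_abs(2)[OF assms(1) _ assms(2)] by (auto simp: J_def)
  have "card ((\<lambda>j. \<bar>x j\<bar>) ` J) = card ((\<lambda>j. \<bar>y j\<bar>) ` J)"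
    using same_signs_abs(3)[OF assms(1)] by (intro card_image_eq_if_same_fibres) (auto simp: J_def)
  then have "abs_rank n x i = abs_rank n y i"
    unfolding abs_rank_eq_card_image J_def[symmetric] J[symmetric] .
  then show ?thesis using same_signs_abs(1)[OF assms(1,2,2)] by (simp add: signed_rank_def)
qed

lemma abs_rank_eq_0: "x i = 0 \<Longrightarrow> abs_rank n x i = 0"
  by (simp add: abs_rank_eq_card_image)

lemma abs_rank_pos: "i < n \<Longrightarrow> x i \<noteq> 0 \<Longrightarrow> abs_rank n x i > 0"
  unfolding abs_rank_def using finite_abs_values by (auto simp: card_gt_0_iff abs_values_def)

lemma abs_rank_le_card: "abs_rank n x i \<le> card (abs_values n x)"
  unfolding abs_rank_def by (rule card_mono[OF finite_abs_values]) auto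

lemma card_le_strict_mono:
  fixes a b :: "'a::linorder"
  assumes "finite A" "b \<in> A" "a < b"
  shows "card {c \<in> A. c \<le> a} < card {c \<in> A. c \<le> b}"
proof (rule psubset_card_mono)
  have "{c \<in> A. c \<le> a} \<subseteq> {c \<in> A. c \<le> b}" using assms(3) by auto
  moreover have "b \<in> {c \<in> A. c \<le> b}" "b \<notin> {c \<in> A. c \<le> a}" using assms by auto
  ultimately show "{c \<in> A. c \<le> a} \<subset> {c \<in> A. c \<le> b}" by blast
qed (simp add: assms(1))

lemma abs_rank_strict_mono:
  assumes "j < n" "\<bar>x i\<bar> < \<bar>x j\<bar>"
  shows "abs_rank n x i < abs_rank n x j"
  unfolding abs_rank_def
  using assms by (intro card_le_strict_mono finite_abs_values) (auto simp: abs_values_def)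

lemma card_le_image_eq:
  fixes A :: "'a::linorder set"
  assumes "finite A"
  shows "(\<lambda>a. card {c \<in> A. c \<le> a}) ` A = {1..card A}"
proof -
  let ?rank = "\<lambda>a. card {c \<in> A. c \<le> a}"
  have "strict_mono_on A ?rank"
  proof (rule strict_mono_onI)
    fix a b assume "a \<in> A" "b \<in> A" "a < b"
    then show "?rank a < ?rank b" using assms by (intro card_le_strict_mono)
  qed
  then have inj: "inj_on ?rank A" by (rule strict_mono_on_imp_inj_on)
  have "?rank a \<in> {1..card A}" if "a \<in> A" for a
  proof -
    have "a \<in> {c \<in> A. c \<le> a}" using that by simp
    then have "?rank a \<noteq> 0" using assms by (subst card_eq_0_iff) auto
    moreover have "?rank a \<le> card A" by (rule card_mono[OF assms]) auto
    ultimately show ?thesis by simp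
  qed
  then show ?thesis using card_image[OF inj] by (intro card_subset_eq) auto
qed

lemma abs_rank_onto:
  assumes "m \<in> {1..card (abs_values n x)}"
  shows "\<exists>i<n. abs_rank n x i = m"
proof -
  have "m \<in> (\<lambda>a. card {c \<in> abs_values n x. c \<le> a}) ` abs_values n x"
    using card_le_image_eq[OF finite_abs_values] assms by simp
  then show ?thesis by (auto simp: abs_values_def abs_rank_def)
qed

lemma sgn_signed_rank:
  assumes "i < n" "j < n"
  shows "sgn (signed_rank n x i - signed_rank n x j) = sgn (x i - x j)"
    "sgn (signed_rank n x i + signed_rank n x j) = sgn (x i + x j)"
proof -
  have rescaled: "sgn (sgn a * real (abs_rank n x i) - sgn b * real (abs_rank n x j)) = sgn (a - b)"
    if "\<bar>a\<bar> = \<bar>x i\<bar>" "\<bar>b\<bar> = \<bar>x j\<bar>" for a b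
    using that assms abs_rank_eq_0[of x i n] abs_rank_eq_0[of x j n] abs_rank_pos[of i n x] abs_rank_pos[of j n x]
      abs_rank_strict_mono[of i n x j] abs_rank_strict_mono[of j n x i]
    by (intro sgn_diff_rescaled) (auto simp: abs_rank_def)
  show "sgn (signed_rank n x i - signed_rank n x j) = sgn (x i - x j)"
    using rescaled[of "x i" "x j"] by (simp add: signed_rank_def)
  show "sgn (signed_rank n x i + signed_rank n x j) = sgn (x i + x j)"
    using rescaled[of "x i" "- x j"] by (simp add: signed_rank_def sgn_minus)
qed

section \<open>Face codes\<close>

text \<open>Face codes are the integer vectors of signed ranks: weakly decreasing integer sequences
  whose nonzero absolute values are exactly \<open>1..k\<close>.\<close>

definition face_codes :: "nat \<Rightarrow> nat \<Rightarrow> int list set" where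
  "face_codes n k = {xs. length xs = n \<and> sorted_wrt (\<ge>) xs \<and> (\<forall>x\<in>set xs. \<bar>x\<bar> \<le> int k)
                     \<and> (\<forall>v\<in>{1..int k}. v \<in> abs ` set xs)}"

definition code_point :: "int list \<Rightarrow> nat \<Rightarrow> real" where
  "code_point xs i = (if i < length xs then real_of_int (xs ! i) else 0)"

definition rank_code :: "nat \<Rightarrow> (nat \<Rightarrow> real) \<Rightarrow> int list" where
  "rank_code n x = map (\<lambda>i. if x i < 0 then - int (abs_rank n x i) else int (abs_rank n x i)) [0..<n]"

lemma code_point_in_Rn: "length xs = n \<Longrightarrow> code_point xs \<in> Rn n"
  by (simp add: code_point_def Rn_def)

lemma face_codes_bound: "xs \<in> face_codes n k \<Longrightarrow> i < n \<Longrightarrow> \<bar>xs ! i\<bar> \<le> int k"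
  by (auto simp: face_codes_def)

lemma face_codes_witness:
  assumes "xs \<in> face_codes n k" "u \<in> {1..k}"
  shows "\<exists>j<n. \<bar>xs ! j\<bar> = int u"
proof -
  have "int u \<in> abs ` set xs" using assms by (auto simp: face_codes_def)
  then show ?thesis using assms(1) by (auto simp: face_codes_def in_set_conv_nth)
qed

lemma code_point_in_Wcl:
  assumes "xs \<in> face_codes n k"
  shows "code_point xs \<in> Wcl n"
proof -
  have len: "length xs = n" and sorted: "sorted_wrt (\<ge>) xs" using assms by (auto simp: face_codes_def)
  have "code_point xs j \<le> code_point xs i" if "i \<le> j" "j < n" for i j
    using that len sorted by (cases "i = j") (auto simp: code_point_def sorted_wrt_iff_nth_less)
  then show ?thesis using code_point_in_Rn[OF len] by (simp add: Wcl_def)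
qed

lemma signed_rank_code_point:
  assumes xs: "xs \<in> face_codes n k" and i: "i < n"
  shows "signed_rank n (code_point xs) i = real_of_int (xs ! i)"
proof -
  have len: "length xs = n" using xs by (simp add: face_codes_def)
  have pt: "code_point xs j = real_of_int (xs ! j)" if "j < n" for j
    using that len by (simp add: code_point_def)
  have "{a \<in> abs_values n (code_point xs). a \<le> \<bar>code_point xs i\<bar>} = real_of_int ` {1..\<bar>xs ! i\<bar>}"
  proof (intro equalityI subsetI)
    fix a assume "a \<in> {a \<in> abs_values n (code_point xs). a \<le> \<bar>code_point xs i\<bar>}"
    then obtain j where "j < n" "xs ! j \<noteq> 0" "\<bar>xs ! j\<bar> \<le> \<bar>xs ! i\<bar>" "a = \<bar>xs ! j\<bar>"
      using pt i by (auto simp: abs_values_def)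
    then show "a \<in> real_of_int ` {1..\<bar>xs ! i\<bar>}" by (intro image_eqI[where x = "\<bar>xs ! j\<bar>"]) auto
  next
    fix a assume "a \<in> real_of_int ` {1..\<bar>xs ! i\<bar>}"
    then obtain u where u: "u \<in> {1..\<bar>xs ! i\<bar>}" "a = real_of_int u" by auto
    then have "nat u \<in> {1..k}" using face_codes_bound[OF xs i] by auto
    then obtain j where "j < n" "\<bar>xs ! j\<bar> = u" using face_codes_witness[OF xs] u by force
    then show "a \<in> {a \<in> abs_values n (code_point xs). a \<le> \<bar>code_point xs i\<bar>}"
      using u pt i by (auto simp: abs_values_def image_iff)
  qed
  then have "abs_rank n (code_point xs) i = nat \<bar>xs ! i\<bar>"
    by (simp add: abs_rank_def card_image inj_on_def)
  then show ?thesis using pt[OF i] by (simp add: signed_rank_def sgn_if)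
qed

lemma face_codes_eq_if_same_signs:
  assumes "xs \<in> face_codes n k" "ys \<in> face_codes n k'" "same_signs n (code_point xs) (code_point ys)"
  shows "xs = ys"
proof (rule nth_equalityI)
  show "length xs = length ys" using assms by (simp add: face_codes_def)
  fix i assume "i < length xs"
  then have i: "i < n" using assms by (simp add: face_codes_def)
  have "real_of_int (xs ! i) = real_of_int (ys ! i)"
    using signed_rank_code_point[OF assms(1) i] signed_rank_code_point[OF assms(2) i]
      signed_rank_same_signs[OF assms(3) i] by simp
  then show "xs ! i = ys ! i" by simp
qed

lemma code_point_rank_code: "i < n \<Longrightarrow> code_point (rank_code n x) i = signed_rank n x i"
  by (auto simp: code_point_def rank_code_def signed_rank_def abs_rank_eq_0 sgn_if)

lemma same_signs_rank_code: "same_signs n x (code_point (rank_code n x))"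
  unfolding same_signs_def root_indices_def
  using sgn_signed_rank code_point_rank_code by auto

lemma rank_code_in_face_codes:
  assumes x: "x \<in> Wcl n"
  shows "rank_code n x \<in> face_codes n (card (abs_values n x))"
proof -
  let ?k = "card (abs_values n x)"
  have len: "length (rank_code n x) = n" by (simp add: rank_code_def)
  have abs_code: "\<bar>rank_code n x ! i\<bar> = int (abs_rank n x i)" if "i < n" for i
    using that by (simp add: rank_code_def)
  have "sorted_wrt (\<ge>) (rank_code n x)"
    unfolding sorted_wrt_iff_nth_less len
  proof (intro allI impI)
    fix i j assume ij: "i < j" "j < n"
    then have "x j \<le> x i" using x by (simp add: Wcl_def)
    then have "signed_rank n x j \<le> signed_rank n x i"
      using sgn_signed_rank(1)[of i n j x] ij by (auto simp: sgn_if split: if_splits)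
    then have "code_point (rank_code n x) j \<le> code_point (rank_code n x) i"
      using ij code_point_rank_code[of i n x] code_point_rank_code[of j n x] by simp
    then show "rank_code n x ! j \<le> rank_code n x ! i" using ij len by (simp add: code_point_def)
  qed
  moreover have "\<forall>c\<in>set (rank_code n x). \<bar>c\<bar> \<le> int ?k"
    using abs_code abs_rank_le_card by (auto simp: in_set_conv_nth len)
  moreover have "v \<in> abs ` set (rank_code n x)" if v: "v \<in> {1..int ?k}" for v
  proof -
    have "nat v \<in> {1..?k}" using v by auto
    then obtain i where i: "i < n" "abs_rank n x i = nat v" using abs_rank_onto by blast
    then have "\<bar>rank_code n x ! i\<bar> = v" using v abs_code by simp
    moreover have "rank_code n x ! i \<in> set (rank_code n x)" using i(1) len by simp
    ultimately show ?thesis by (metis image_eqI)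
  qed
  ultimately show ?thesis using len by (simp add: face_codes_def)
qed

section \<open>Dimension of the face of a code\<close>

global_interpretation pointwise: vector_space "\<lambda>(c::real) (f::nat \<Rightarrow> real) i. c * f i"
  by unfold_locales (auto simp: fun_eq_iff algebra_simps)

lemma sum_fun_apply: "(\<Sum>v\<in>S. (f v :: nat \<Rightarrow> real)) i = (\<Sum>v\<in>S. f v i)"
  by (induction S rule: infinite_finite_induct) auto

text \<open>The \<open>v\<close>-th level vector has entry \<open>sgn x\<^sub>i\<close> where \<open>|x\<^sub>i| \<ge> v\<close> and \<open>0\<close> elsewhere; the
  level vectors \<open>1..k\<close> form a basis of the span of the face of a code \<open>x\<close> with \<open>|x\<^sub>i| \<le> k\<close>.\<close>

definition level_sign :: "nat \<Rightarrow> int \<Rightarrow> int" where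
  "level_sign v t = (if int v \<le> \<bar>t\<bar> then sgn t else 0)"

definition level_vector :: "nat \<Rightarrow> int list \<Rightarrow> nat \<Rightarrow> nat \<Rightarrow> real" where
  "level_vector n xs v i = (if i < n then real_of_int (level_sign v (xs ! i)) else 0)"

lemma level_sign_mono: "a \<le> b \<Longrightarrow> level_sign v a \<le> level_sign v b"
  by (auto simp: level_sign_def sgn_if)

lemma level_sign_uminus: "level_sign v (- b) = - level_sign v b"
  by (auto simp: level_sign_def sgn_if)

lemma weakly_same_sign_level_sign_diff:
  "weakly_same_sign (real_of_int (a - b)) (real_of_int (level_sign v a - level_sign v b))"
  using level_sign_mono[of a b v] level_sign_mono[of b a v]
  by (cases a b rule: linorder_cases) (auto simp: weakly_same_sign_def)

lemma level_vector_in_face_cone: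
  assumes "length xs = n"
  shows "level_vector n xs v \<in> face_cone n (code_point xs)"
proof -
  have "weakly_same_sign (root_form f (code_point xs)) (root_form f (level_vector n xs v))"
    if "f \<in> root_indices n" for f
  proof -
    obtain b i j where f: "f = (b, i, j)" by (cases f)
    with that have "i < n" "j < n" by (auto simp: root_indices_def)
    show ?thesis
    proof (cases b)
      case True
      then show ?thesis
        using weakly_same_sign_level_sign_diff[of "xs ! i" "- (xs ! j)" v] f \<open>i < n\<close> \<open>j < n\<close> assms
        by (simp add: code_point_def level_vector_def level_sign_uminus)
    next
      case False
      then show ?thesis
        using weakly_same_sign_level_sign_diff[of "xs ! i" "xs ! j" v] f \<open>i < n\<close> \<open>j < n\<close> assms
        by (simp add: code_point_def level_vector_def)
    qed
  qed
  then show ?thesis by (simp add: face_cone_def specializes_def Rn_def level_vector_def)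
qed

lemma level_vector_eq:
  "level_vector n xs v i = (if i < n \<and> v \<le> nat \<bar>xs ! i\<bar> then real_of_int (sgn (xs ! i)) else 0)"
  by (auto simp: level_vector_def level_sign_def)

lemma face_codes_witnesses:
  assumes "xs \<in> face_codes n k"
  obtains idx where "\<And>u. u \<in> {1..k} \<Longrightarrow> idx u < n \<and> \<bar>xs ! idx u\<bar> = int u"
  using face_codes_witness[OF assms] by metis

lemma level_vectors_triangular:
  assumes "xs \<in> face_codes n k"
  obtains idx where "\<And>m. m \<in> {1..k} \<Longrightarrow> real_of_int (sgn (xs ! idx m)) \<noteq> 0"
    "\<And>m v. m \<in> {1..k} \<Longrightarrow>
       level_vector n xs v (idx m) = (if v \<le> m then real_of_int (sgn (xs ! idx m)) else 0)"
proof -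
  obtain idx where idx: "\<And>u. u \<in> {1..k} \<Longrightarrow> idx u < n \<and> \<bar>xs ! idx u\<bar> = int u"
    using face_codes_witnesses[OF assms] by blast
  have "real_of_int (sgn (xs ! idx m)) \<noteq> 0" if "m \<in> {1..k}" for m
    using idx[OF that] that by (auto simp: sgn_if)
  moreover have "level_vector n xs v (idx m) = (if v \<le> m then real_of_int (sgn (xs ! idx m)) else 0)"
    if "m \<in> {1..k}" for m v
    using idx[OF that] by (simp add: level_vector_eq)
  ultimately show ?thesis using that by blast
qed

lemma inj_on_level_vector:
  assumes "xs \<in> face_codes n k"
  shows "inj_on (level_vector n xs) {1..k}"
proof (rule inj_onI)
  obtain idx where sgn_idx: "\<And>m. m \<in> {1..k} \<Longrightarrow> real_of_int (sgn (xs ! idx m)) \<noteq> 0"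
    and g_idx: "\<And>m v. m \<in> {1..k} \<Longrightarrow>
       level_vector n xs v (idx m) = (if v \<le> m then real_of_int (sgn (xs ! idx m)) else 0)"
    using level_vectors_triangular[OF assms] by blast
  fix v w assume vw: "v \<in> {1..k}" "w \<in> {1..k}" "level_vector n xs v = level_vector n xs w"
  have "level_vector n xs w (idx v) \<noteq> 0"
    using g_idx[OF vw(1), of v] sgn_idx[OF vw(1)] vw(3) by simp
  then have "w \<le> v" using g_idx[OF vw(1), of w] by (simp split: if_splits)
  have "level_vector n xs v (idx w) \<noteq> 0"
    using g_idx[OF vw(2), of w] sgn_idx[OF vw(2)] vw(3) by simp
  then have "v \<le> w" using g_idx[OF vw(2), of v] by (simp split: if_splits)
  with \<open>w \<le> v\<close> show "v = w" by simp
qed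

lemma level_vectors_independent:
  assumes "xs \<in> face_codes n k"
  shows "pointwise.independent (level_vector n xs ` {1..k})"
proof -
  obtain idx where sgn_idx: "\<And>m. m \<in> {1..k} \<Longrightarrow> real_of_int (sgn (xs ! idx m)) \<noteq> 0"
    and g_idx: "\<And>m v. m \<in> {1..k} \<Longrightarrow>
       level_vector n xs v (idx m) = (if v \<le> m then real_of_int (sgn (xs ! idx m)) else 0)"
    using level_vectors_triangular[OF assms] by blast
  let ?g = "level_vector n xs"
  note inj = inj_on_level_vector[OF assms]
  show ?thesis
  proof
    assume "pointwise.dependent (?g ` {1..k})"
    then obtain c where c: "\<exists>w\<in>?g ` {1..k}. c w \<noteq> 0" "(\<Sum>w\<in>?g ` {1..k}. (\<lambda>i. c w * w i)) = 0"
      using pointwise.dependent_finite[of "?g ` {1..k}"] by auto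
    define P where "P m = (\<Sum>v\<in>{1..m}. c (?g v))" for m
    have P0: "P m = 0" if m: "m \<in> {1..k}" for m
    proof -
      have "P m * real_of_int (sgn (xs ! idx m)) = (\<Sum>v\<in>{1..k}. c (?g v) * ?g v (idx m))"
        using m unfolding P_def g_idx[OF m]
        by (simp add: if_distrib sum.inter_filter[symmetric] sum_distrib_right cong: if_cong)
          (intro sum.cong; auto)
      also have "\<dots> = 0"
        using sum.reindex[OF inj, of "\<lambda>w. c w * w (idx m)"] fun_cong[OF c(2), of "idx m"]
        by (simp add: sum_fun_apply)
      finally show ?thesis using sgn_idx[OF m] by simp
    qed
    have "c (?g m) = 0" if "m \<in> {1..k}" for m
    proof -
      have "c (?g m) = P m - P (m - 1)"
        using that by (cases m) (simp_all add: P_def)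
      moreover have "P (m - 1) = 0"
      proof (cases "m = 1")
        case False
        then have "m - 1 \<in> {1..k}" using that by auto
        then show ?thesis by (rule P0)
      qed (simp add: P_def)
      ultimately show ?thesis using P0[OF that] by simp
    qed
    then show False using c(1) by blast
  qed
qed

lemma face_cone_code_point_factors:
  assumes xs: "xs \<in> face_codes n k" and y: "y \<in> face_cone n (code_point xs)"
  obtains t where "t 0 = 0" "\<And>i. i < n \<Longrightarrow> y i = real_of_int (sgn (xs ! i)) * t (nat \<bar>xs ! i\<bar>)"
proof -
  obtain idx where idx: "\<And>u. u \<in> {1..k} \<Longrightarrow> idx u < n \<and> \<bar>xs ! idx u\<bar> = int u"
    using face_codes_witnesses[OF xs] by blast
  have len: "length xs = n" using xs by (simp add: face_codes_def)
  have spec: "specializes n (code_point xs) y" using y by (simp add: face_cone_def)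
  have zero: "y i = 0" if "i < n" "xs ! i = 0" for i
    using specializesD(1)[OF spec that(1) that(1)] that len by (simp add: code_point_def weakly_same_sign_def)
  have equal: "y i = y j" if "i < n" "j < n" "xs ! i = xs ! j" for i j
    using specializesD(2)[OF spec that(1,2)] that len by (simp add: code_point_def weakly_same_sign_def)
  have opposite: "y i = - y j" if "i < n" "j < n" "xs ! i = - xs ! j" for i j
    using specializesD(1)[OF spec that(1,2)] that len by (simp add: code_point_def weakly_same_sign_def)
  define t where "t u = (if u = 0 then 0 else real_of_int (sgn (xs ! idx u)) * y (idx u))" for u
  have "y i = real_of_int (sgn (xs ! i)) * t (nat \<bar>xs ! i\<bar>)" if i: "i < n" for i
  proof (cases "xs ! i = 0")
    case True
    then show ?thesis using zero[OF i] by simp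
  next
    case False
    define u where "u = nat \<bar>xs ! i\<bar>"
    have u: "u \<in> {1..k}" using False face_codes_bound[OF xs i] by (auto simp: u_def)
    have j: "idx u < n" "\<bar>xs ! idx u\<bar> = \<bar>xs ! i\<bar>" using idx[OF u] False by (auto simp: u_def)
    have t_u: "t u = real_of_int (sgn (xs ! idx u)) * y (idx u)" using u by (simp add: t_def)
    consider "xs ! idx u = xs ! i" | "xs ! idx u = - xs ! i" using j(2) by (auto simp: abs_eq_iff)
    then show ?thesis
    proof cases
      case 1
      then have "y (idx u) = y i" using equal[OF j(1) i] by simp
      with 1 t_u False show ?thesis by (simp add: u_def[symmetric] sgn_if)
    next
      case 2
      then have "y (idx u) = - y i" using opposite[OF j(1) i] by simp
      with 2 t_u False show ?thesis by (simp add: u_def[symmetric] sgn_if)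
    qed
  qed
  moreover have "t 0 = 0" by (simp add: t_def)
  ultimately show ?thesis using that by blast
qed

lemma face_cone_code_point_subset_span:
  assumes xs: "xs \<in> face_codes n k"
  shows "face_cone n (code_point xs) \<subseteq> pointwise.span (level_vector n xs ` {1..k})"
proof
  fix y assume y: "y \<in> face_cone n (code_point xs)"
  obtain t where t0: "t 0 = 0" and t: "\<And>i. i < n \<Longrightarrow> y i = real_of_int (sgn (xs ! i)) * t (nat \<bar>xs ! i\<bar>)"
    using face_cone_code_point_factors[OF xs y] by blast
  have "y = (\<Sum>v\<in>{1..k}. (\<lambda>i. (t v - t (v - 1)) * level_vector n xs v i))"
  proof
    fix i
    show "y i = (\<Sum>v\<in>{1..k}. (\<lambda>i. (t v - t (v - 1)) * level_vector n xs v i)) i"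
    proof (cases "i < n")
      case False
      then show ?thesis using y by (simp add: sum_fun_apply level_vector_def face_cone_def Rn_def)
    next
      case True
      define m where "m = nat \<bar>xs ! i\<bar>"
      have "m \<le> k" using face_codes_bound[OF xs True] by (simp add: m_def)
      then have "{v \<in> {1..k}. v \<le> m} = {Suc 0..m}" by auto
      then have "(\<Sum>v\<in>{1..k}. (t v - t (v - 1)) * level_vector n xs v i) =
          (\<Sum>v\<in>{Suc 0..m}. t v - t (v - 1)) * real_of_int (sgn (xs ! i))"
        using True by (simp add: level_vector_eq m_def[symmetric] if_distrib sum.inter_filter[symmetric]
            sum_distrib_right cong: if_cong)
      also have "\<dots> = y i"
      proof -
        have "(\<Sum>v\<in>{Suc 0..m}. t v - t (v - 1)) = t m" using sum_telescope''[of 0 m t] t0 by simp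
        then show ?thesis using t[OF True] by (simp add: m_def)
      qed
      finally show ?thesis by (simp add: sum_fun_apply)
    qed
  qed
  also have "\<dots> \<in> pointwise.span (level_vector n xs ` {1..k})"
    by (intro pointwise.span_sum pointwise.span_scale pointwise.span_base) auto
  finally show "y \<in> pointwise.span (level_vector n xs ` {1..k})" .
qed

lemma span_dim_face_cone_code_point:
  assumes xs: "xs \<in> face_codes n k"
  shows "span_dim (face_cone n (code_point xs)) = k"
proof -
  have "level_vector n xs ` {1..k} \<subseteq> face_cone n (code_point xs)"
    using level_vector_in_face_cone xs by (auto simp: face_codes_def)
  then have "pointwise.dim (face_cone n (code_point xs)) = card (level_vector n xs ` {1..k})"
    using face_cone_code_point_subset_span[OF xs] level_vectors_independent[OF xs]
    by (rule pointwise.dim_unique) simp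
  then show ?thesis
    using card_image[OF inj_on_level_vector[OF xs]] by (simp add: span_dim_def)
qed

lemma faces_of_dim_eq: "{F \<in> faces n. span_dim F = k} = (\<lambda>xs. face_cone n (code_point xs)) ` face_codes n k"
proof
  show "{F \<in> faces n. span_dim F = k} \<subseteq> (\<lambda>xs. face_cone n (code_point xs)) ` face_codes n k"
  proof
    fix F assume "F \<in> {F \<in> faces n. span_dim F = k}"
    then have F: "F \<in> faces n" "span_dim F = k" by simp_all
    then obtain x where x: "x \<in> Wcl n" "F = face_cone n x" unfolding faces_eq by blast
    have code: "rank_code n x \<in> face_codes n (card (abs_values n x))"
      by (rule rank_code_in_face_codes[OF x(1)])
    have "F = face_cone n (code_point (rank_code n x))"
      using x(2) face_cone_cong[OF same_signs_rank_code] by simp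
    moreover have "card (abs_values n x) = k"
      using F(2) span_dim_face_cone_code_point[OF code] calculation by simp
    ultimately show "F \<in> (\<lambda>xs. face_cone n (code_point xs)) ` face_codes n k" using code by blast
  qed
  show "(\<lambda>xs. face_cone n (code_point xs)) ` face_codes n k \<subseteq> {F \<in> faces n. span_dim F = k}"
    using code_point_in_Wcl span_dim_face_cone_code_point unfolding faces_eq by blast
qed

lemma num_faces_eq_card_face_codes: "num_faces n k = card (face_codes n k)"
proof -
  have "inj_on (\<lambda>xs. face_cone n (code_point xs)) (face_codes n k)"
  proof (rule inj_onI)
    fix xs ys assume xs: "xs \<in> face_codes n k" and ys: "ys \<in> face_codes n k"
      and eq: "face_cone n (code_point xs) = face_cone n (code_point ys)"
    have "length xs = n" "length ys = n" using xs ys by (simp_all add: face_codes_def)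
    then have "same_signs n (code_point xs) (code_point ys)"
      using same_signs_if_face_cone_eq[OF code_point_in_Rn code_point_in_Rn eq] by simp
    then show "xs = ys" using face_codes_eq_if_same_signs xs ys by blast
  qed
  then show ?thesis unfolding num_faces_def faces_of_dim_eq by (rule card_image)
qed

section \<open>Counting face codes\<close>

lemma finite_bounded_int_lists: "finite {xs :: int list. length xs = n \<and> (\<forall>x\<in>set xs. \<bar>x\<bar> \<le> int k)}"
proof -
  have "{xs :: int list. length xs = n \<and> (\<forall>x\<in>set xs. \<bar>x\<bar> \<le> int k)} \<subseteq>
      {xs. set xs \<subseteq> {- int k..int k} \<and> length xs = n}"
    by (auto simp: abs_le_iff)
  then show ?thesis using finite_lists_length_eq[of "{- int k..int k}" n] finite_subset by blast
qed

lemma finite_face_codes: "finite (face_codes n k)"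
  by (rule finite_subset[OF _ finite_bounded_int_lists[of n k]]) (auto simp: face_codes_def)

lemma face_codes_0: "face_codes n 0 = {replicate n 0}"
  by (auto simp: face_codes_def sorted_wrt_iff_nth_less intro: replicate_eqI)

lemma face_codes_empty:
  assumes "n < k"
  shows "face_codes n k = {}"
proof (rule ccontr)
  assume "face_codes n k \<noteq> {}"
  then obtain xs where xs: "xs \<in> face_codes n k" by blast
  have "int ` {1..k} \<subseteq> abs ` set xs" using xs by (force simp: face_codes_def)
  then have "k \<le> card (abs ` set xs)"
    using card_mono[of "abs ` set xs" "int ` {1..k}"] by (simp add: card_image)
  also have "\<dots> \<le> n" using card_image_le[of "set xs" abs] card_length[of xs] xs by (simp add: face_codes_def)
  finally show False using assms by simp
qed

definition near_codes :: "nat \<Rightarrow> nat \<Rightarrow> int list set" where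
  "near_codes n k = {xs. length xs = n \<and> sorted_wrt (\<ge>) xs \<and> (\<forall>x\<in>set xs. \<bar>x\<bar> \<le> int k)
                     \<and> (\<forall>v\<in>{1..int k - 1}. v \<in> abs ` set xs)}"

definition near_codes_below_top :: "nat \<Rightarrow> nat \<Rightarrow> int list set" where
  "near_codes_below_top n k = {xs \<in> near_codes n k. int k \<notin> set xs}"

lemma finite_near_codes: "finite (near_codes n k)"
  by (rule finite_subset[OF _ finite_bounded_int_lists[of n k]]) (auto simp: near_codes_def)

lemma finite_near_codes_below_top: "finite (near_codes_below_top n k)"
  using finite_near_codes by (simp add: near_codes_below_top_def)

lemma face_codes_eq_near_codes:
  assumes "k \<ge> 1"
  shows "face_codes n k = {xs \<in> near_codes n k. int k \<in> abs ` set xs}"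
proof -
  have "{1..int k} = insert (int k) {1..int k - 1}" using assms by auto
  then show ?thesis by (auto simp: face_codes_def near_codes_def)
qed

lemma face_codes_pred_eq_near_codes:
  assumes "k \<ge> 1"
  shows "face_codes n (k - 1) = {xs \<in> near_codes n k. int k \<notin> set xs \<and> - int k \<notin> set xs}"
proof -
  have "\<bar>x\<bar> \<le> int (k - 1) \<longleftrightarrow> \<bar>x\<bar> \<le> int k \<and> x \<noteq> int k \<and> x \<noteq> - int k" for x
    using assms by auto
  then show ?thesis using assms by (auto simp: face_codes_def near_codes_def of_nat_diff)
qed

lemma near_codes_eq_Un:
  assumes "k \<ge> 1"
  shows "near_codes n k = face_codes n k \<union> face_codes n (k - 1)"
    and "face_codes n k \<inter> face_codes n (k - 1) = {}"
proof -
  have top: "int k \<in> abs ` S \<longleftrightarrow> int k \<in> S \<or> - int k \<in> S" for S :: "int set"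
  proof
    assume "int k \<in> abs ` S"
    then obtain x where x: "x \<in> S" "\<bar>x\<bar> = int k" by auto
    then have "x = int k \<or> x = - int k" by linarith
    with x(1) show "int k \<in> S \<or> - int k \<in> S" by auto
  qed force
  show "near_codes n k = face_codes n k \<union> face_codes n (k - 1)"
    "face_codes n k \<inter> face_codes n (k - 1) = {}"
    unfolding face_codes_eq_near_codes[OF assms] face_codes_pred_eq_near_codes[OF assms] top by auto
qed

lemma Cons_top_in_near_codes:
  "xs \<in> near_codes (Suc n) k \<and> int k \<in> set xs \<longleftrightarrow> (\<exists>ys\<in>near_codes n k. xs = int k # ys)"
proof
  assume xs: "xs \<in> near_codes (Suc n) k \<and> int k \<in> set xs"
  then obtain a ys where a: "xs = a # ys" by (cases xs) (auto simp: near_codes_def)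
  have "a = int k" using xs by (auto simp: a near_codes_def)
  then show "\<exists>ys\<in>near_codes n k. xs = int k # ys" using xs by (auto simp: a near_codes_def)
next
  assume "\<exists>ys\<in>near_codes n k. xs = int k # ys"
  then show "xs \<in> near_codes (Suc n) k \<and> int k \<in> set xs"
    by (auto simp: near_codes_def abs_le_iff)
qed

lemma snoc_bottom_in_near_codes_below_top:
  assumes "k \<ge> 1"
  shows "xs \<in> near_codes_below_top (Suc n) k \<and> - int k \<in> set xs \<longleftrightarrow>
     (\<exists>ys\<in>near_codes_below_top n k. xs = ys @ [- int k])"
proof
  assume xs: "xs \<in> near_codes_below_top (Suc n) k \<and> - int k \<in> set xs"
  then obtain b ys where b: "xs = ys @ [b]"
    by (cases xs rule: rev_cases) (auto simp: near_codes_below_top_def near_codes_def)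
  have "b = - int k" using xs by (auto simp: b near_codes_below_top_def near_codes_def sorted_wrt_append)
  then show "\<exists>ys\<in>near_codes_below_top n k. xs = ys @ [- int k]"
    using xs by (auto simp: b near_codes_below_top_def near_codes_def sorted_wrt_append)
next
  assume "\<exists>ys\<in>near_codes_below_top n k. xs = ys @ [- int k]"
  then obtain ys where ys: "ys \<in> near_codes_below_top n k" "xs = ys @ [- int k]" by blast
  have "\<forall>y\<in>set ys. - int k \<le> y"
    using ys(1) by (force simp: near_codes_below_top_def near_codes_def abs_le_iff)
  then show "xs \<in> near_codes_below_top (Suc n) k \<and> - int k \<in> set xs"
    using ys assms by (auto simp: near_codes_below_top_def near_codes_def sorted_wrt_append)
qed

lemma near_codes_Suc_eq_Un:
  "near_codes (Suc n) k = Cons (int k) ` near_codes n k \<union> near_codes_below_top (Suc n) k"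
  "Cons (int k) ` near_codes n k \<inter> near_codes_below_top (Suc n) k = {}"
proof -
  have "Cons (int k) ` near_codes n k = {xs \<in> near_codes (Suc n) k. int k \<in> set xs}"
    using Cons_top_in_near_codes[of _ n k] by blast
  then show "near_codes (Suc n) k = Cons (int k) ` near_codes n k \<union> near_codes_below_top (Suc n) k"
    "Cons (int k) ` near_codes n k \<inter> near_codes_below_top (Suc n) k = {}"
    by (auto simp: near_codes_below_top_def)
qed

lemma near_codes_below_top_Suc_eq_Un:
  assumes "k \<ge> 1"
  shows "near_codes_below_top (Suc n) k =
      (\<lambda>ys. ys @ [- int k]) ` near_codes_below_top n k \<union> face_codes (Suc n) (k - 1)"
    "(\<lambda>ys. ys @ [- int k]) ` near_codes_below_top n k \<inter> face_codes (Suc n) (k - 1) = {}"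
proof -
  have "(\<lambda>ys. ys @ [- int k]) ` near_codes_below_top n k =
      {xs \<in> near_codes_below_top (Suc n) k. - int k \<in> set xs}"
    using snoc_bottom_in_near_codes_below_top[OF assms, of _ n] by blast
  then show "near_codes_below_top (Suc n) k =
      (\<lambda>ys. ys @ [- int k]) ` near_codes_below_top n k \<union> face_codes (Suc n) (k - 1)"
    "(\<lambda>ys. ys @ [- int k]) ` near_codes_below_top n k \<inter> face_codes (Suc n) (k - 1) = {}"
    using face_codes_pred_eq_near_codes[OF assms, of "Suc n"] by (auto simp: near_codes_below_top_def)
qed

lemma card_near_codes:
  "k \<ge> 1 \<Longrightarrow> card (near_codes n k) = card (face_codes n k) + card (face_codes n (k - 1))"
  using near_codes_eq_Un card_Un_disjoint[OF finite_face_codes finite_face_codes] by simp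

lemma card_near_codes_Suc:
  "card (near_codes (Suc n) k) = card (near_codes n k) + card (near_codes_below_top (Suc n) k)"
proof -
  have "card (Cons (int k) ` near_codes n k) = card (near_codes n k)" by (rule card_image) simp
  moreover have "finite (Cons (int k) ` near_codes n k)" using finite_near_codes by simp
  ultimately show ?thesis
    using near_codes_Suc_eq_Un[where n = n and k = k] card_Un_disjoint[OF _ finite_near_codes_below_top]
    by simp
qed

lemma card_near_codes_below_top_Suc:
  assumes "k \<ge> 1"
  shows "card (near_codes_below_top (Suc n) k) =
    card (near_codes_below_top n k) + card (face_codes (Suc n) (k - 1))"
proof -
  have "card ((\<lambda>ys. ys @ [- int k]) ` near_codes_below_top n k) = card (near_codes_below_top n k)"
    by (rule card_image) (simp add: inj_on_def)
  then show ?thesis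
    using near_codes_below_top_Suc_eq_Un[OF assms, where n = n] card_Un_disjoint[OF _ finite_face_codes]
      finite_near_codes_below_top by simp
qed

text \<open>Writing \<open>L n j\<close> for the number of face codes of length \<open>n\<close> for \<open>j\<close>, and \<open>M n\<close>, \<open>N n\<close>
  for the numbers of near codes and near codes below top (for fixed \<open>k\<close>), we have \<open>M n = L n k + L n (k - 1)\<close>, and the two splittings give
  \<open>M (n + 2) - M (n + 1) = N (n + 2) = N (n + 1) + L (n + 2) (k - 1) = M (n + 1) - M n + L (n + 2) (k - 1)\<close>.\<close>

lemma card_face_codes_recurrence:
  assumes "k \<ge> 1"
  shows "int (card (face_codes (Suc (Suc n)) k)) =
    2 * int (card (face_codes (Suc n) k)) - int (card (face_codes n k))
    + 2 * int (card (face_codes (Suc n) (k - 1))) - int (card (face_codes n (k - 1)))"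
  using card_near_codes_Suc[of "Suc n" k] card_near_codes_Suc[of n k]
    card_near_codes_below_top_Suc[OF assms, of "Suc n"]
    card_near_codes[OF assms, of n] card_near_codes[OF assms, of "Suc n"]
    card_near_codes[OF assms, of "Suc (Suc n)"]
  by simp

lemma g_of_nat: "g (int n) (int k) = int (card (face_codes n k))"
  using face_codes_empty[of n k] by (auto simp: g_def num_faces_eq_card_face_codes)

lemma g_recurrence_of_nat:
  assumes "k \<ge> 1"
  shows "g (int (Suc (Suc n))) (int k) = 2 * g (int (Suc n)) (int k) - g (int n) (int k)
    + 2 * g (int (Suc n)) (int (k - 1)) - g (int n) (int (k - 1))"
  unfolding g_of_nat using card_face_codes_recurrence[OF assms] .

theorem corollary1p5:
  fixes n k :: int
  assumes "n \<ge> 2"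
  shows "g n k = 2 * g (n - 1) k - g (n - 2) k + 2 * g (n - 1) (k - 1) - g (n - 2) (k - 1)"
proof -
  define m where "m = nat (n - 2)"
  have n: "n = int (Suc (Suc m))" "n - 1 = int (Suc m)" "n - 2 = int m"
    using assms by (simp_all add: m_def)
  consider (neg) "k < 0" | (zero) "k = 0" | (pos) q where "k = int q" "q \<ge> 1"
  proof (cases "k < 0")
    case False
    then obtain q where "k = int q" using zero_le_imp_eq_int by force
    then show ?thesis using that(2,3) by (cases "q = 0") auto
  qed (rule that(1))
  then show ?thesis
  proof cases
    case neg
    then show ?thesis by (simp add: g_def)
  next
    case zero
    then show ?thesis using assms by (simp add: g_def num_faces_eq_card_face_codes face_codes_0)
  next
    case (pos q)
    then have k1: "k - 1 = int (q - 1)" by simp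
    show ?thesis
      unfolding n(2,3) k1 by (unfold n(1) pos(1)) (rule g_recurrence_of_nat[OF pos(2)])
  qed
qed

end
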